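(* Let $n\geq7$ and let $u,v$ be monomials such that $x_{n-1}u\in\mathcal A$ and $x_nv\in\mathcal C$. If $uv\in G(J(P_{n-2})^2)$, then $x_{n-1}x_nuv\in G(J(P_n)^2)$.
   Context: For $m\geq 1$, $P_m$ is the path graph on vertices $x_1,\ldots,x_m$ with edges $\{x_i,x_{i+1}\}$; $J(P_m)$ is its cover ideal (generated by $\prod_{x\in C}x$, $C$ a minimal vertex cover) and $G(I)$ denotes minimal monomial generators. The rooted list $\mathcal R(P_m)$: $\mathcal R(P_1)$ empty; $\mathcal R(P_2)=x_1,x_2$; $\mathcal R(P_3)=x_2,x_1x_3$; $\mathcal R(P_4)=x_1x_3,x_2x_3,x_2x_4$; for $m\geq5$, if $\mathcal R(P_{m-2})=u_1,\ldots,u_r$ and $\mathcal R(P_{m-3})=v_1,\ldots,v_s$, then $\mathcal R(P_m)=x_{m-1}u_1,\ldots,x_{m-1}u_r,x_mx_{m-2}v_1,\ldots,x_mx_{m-2}v_s$; it lists each element of $G(J(P_m))$ once. For $n\geq7$: $\mathcal A$ is the sublist of $\mathcal R(P_n)$ of elements divisible by $x_{n-1}x_{n-3}$ (equivalently $x_{n-1}x_{n-3}w$, $w\in\mathcal R(P_{n-4})$), and $\mathcal C$ is the sublist of elements divisible by $x_nx_{n-4}$ (equivalently $x_nx_{n-2}x_{n-4}w$, $w\in\mathcal R(P_{n-5})$). *)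

theory Defs
  imports Main
begin

text \<open>Monomials in the variables x_1, x_2, ... are represented by their exponent
  vectors nat => nat (u i = exponent of x_i).  Monomial ideals are represented by
  the set of monomials they contain.\<close>

type_synonym monomial = "nat \<Rightarrow> nat"

definition mmul :: "monomial \<Rightarrow> monomial \<Rightarrow> monomial" where
  "mmul u v = (\<lambda>i. u i + v i)"

definition mdvd :: "monomial \<Rightarrow> monomial \<Rightarrow> bool" where
  "mdvd u v \<longleftrightarrow> (\<forall>i. u i \<le> v i)"

definition var :: "nat \<Rightarrow> monomial" where
  "var i = (\<lambda>j. if j = i then 1 else 0)"

definition mideal :: "monomial set \<Rightarrow> monomial set" where
  "mideal S = {w. \<exists>s\<in>S. mdvd s w}"

definition mideal_prod :: "monomial set \<Rightarrow> monomial set \<Rightarrow> monomial set" where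
  "mideal_prod I J = mideal {mmul a b | a b. a \<in> I \<and> b \<in> J}"

definition mideal_sq :: "monomial set \<Rightarrow> monomial set" where
  "mideal_sq I = mideal_prod I I"

text \<open>G(I): minimal monomial generators = divisibility-minimal monomials of I\<close>
definition mgens :: "monomial set \<Rightarrow> monomial set" where
  "mgens I = {w \<in> I. \<forall>w'\<in>I. mdvd w' w \<longrightarrow> w' = w}"

definition is_vertex_cover_path :: "nat \<Rightarrow> nat set \<Rightarrow> bool" where
  "is_vertex_cover_path m C \<longleftrightarrow> C \<subseteq> {1..m} \<and> (\<forall>i. 1 \<le> i \<and> i < m \<longrightarrow> i \<in> C \<or> i + 1 \<in> C)"

definition is_min_vertex_cover_path :: "nat \<Rightarrow> nat set \<Rightarrow> bool" where
  "is_min_vertex_cover_path m C \<longleftrightarrow> is_vertex_cover_path m C \<and>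
     (\<forall>D. D \<subset> C \<longrightarrow> \<not> is_vertex_cover_path m D)"

definition set_monomial :: "nat set \<Rightarrow> monomial" where
  "set_monomial C = (\<lambda>j. if j \<in> C then 1 else 0)"

definition cover_ideal_path :: "nat \<Rightarrow> monomial set" where
  "cover_ideal_path m = mideal {set_monomial C | C. is_min_vertex_cover_path m C}"

fun rooted :: "nat \<Rightarrow> monomial list" where
  "rooted 0 = []"
| "rooted (Suc 0) = []"
| "rooted (Suc (Suc 0)) = [var 1, var 2]"
| "rooted (Suc (Suc (Suc 0))) = [var 2, mmul (var 1) (var 3)]"
| "rooted (Suc (Suc (Suc (Suc 0)))) =
     [mmul (var 1) (var 3), mmul (var 2) (var 3), mmul (var 2) (var 4)]"
| "rooted (Suc (Suc (Suc (Suc (Suc k))))) =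
     map (mmul (var (k + 4))) (rooted (k + 3)) @
     map (mmul (mmul (var (k + 5)) (var (k + 3)))) (rooted (k + 2))"

definition listA :: "nat \<Rightarrow> monomial list" where
  "listA n = filter (\<lambda>w. mdvd (mmul (var (n - 1)) (var (n - 3))) w) (rooted n)"

definition listC :: "nat \<Rightarrow> monomial list" where
  "listC n = filter (\<lambda>w. mdvd (mmul (var n) (var (n - 4))) w) (rooted n)"

end

theory Submission
  imports Defs
begin

text \<open>
  The cover ideal of a path is exactly the set of monomials whose support meets every edge.
  Write \<open>M = x\<^sub>n\<^sub>-\<^sub>1 x\<^sub>n u v\<close>; the hypotheses on \<open>\<A>\<close> and \<open>\<C>\<close> only serve to
  show \<open>M \<in> J(P\<^sub>n)\<^sup>2\<close>.  If \<open>a b\<close> divides \<open>M\<close> with \<open>a, b\<close> covers of \<open>P\<^sub>n\<close>, then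
  cutting \<open>a\<close> and \<open>b\<close> off above \<open>n - 2\<close> gives covers of \<open>P\<^sub>n\<^sub>-\<^sub>2\<close> whose product divides
  \<open>u v\<close>, so by minimality it equals \<open>u v\<close>.  In the two remaining variables \<open>M\<close> has
  exponent one each, while \<open>a\<close> and \<open>b\<close> both meet the last edge; hence \<open>a b\<close> is all of \<open>M\<close>.
\<close>

lemma mdvd_trans: "mdvd u v \<Longrightarrow> mdvd v w \<Longrightarrow> mdvd u w"
  unfolding mdvd_def by (metis order_trans)

lemma mdvd_antisym: "mdvd u v \<Longrightarrow> mdvd v u \<Longrightarrow> u = v"
  unfolding mdvd_def by (intro ext antisym) auto

lemma mgensI:
  assumes "w \<in> I" and "\<And>w'. w' \<in> I \<Longrightarrow> mdvd w' w \<Longrightarrow> mdvd w w'"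
  shows "w \<in> mgens I"
  using assms mdvd_antisym unfolding mgens_def by blast

lemma mem_mideal_sq_iff: "w \<in> mideal_sq I \<longleftrightarrow> (\<exists>a\<in>I. \<exists>b\<in>I. mdvd (mmul a b) w)"
  unfolding mideal_sq_def mideal_prod_def mideal_def by auto

lemma mmul_mem_mideal_sq: "a \<in> I \<Longrightarrow> b \<in> I \<Longrightarrow> mmul a b \<in> mideal_sq I"
  unfolding mem_mideal_sq_iff mdvd_def by (intro bexI[of _ a] bexI[of _ b]) auto

definition covers_path :: "nat \<Rightarrow> monomial \<Rightarrow> bool" where
  "covers_path m w \<longleftrightarrow> (\<forall>i. 1 \<le> i \<and> i < m \<longrightarrow> w i \<noteq> 0 \<or> w (Suc i) \<noteq> 0)"

lemma ex_min_vertex_cover_path_subset: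
  assumes "finite D" and "is_vertex_cover_path m D"
  shows "\<exists>C\<subseteq>D. is_min_vertex_cover_path m C"
  using assms
proof (induction D rule: finite_psubset_induct)
  case (psubset D)
  show ?case
  proof (cases "is_min_vertex_cover_path m D")
    case True
    then show ?thesis by (intro exI[of _ D]) simp
  next
    case False
    then obtain D' where D': "D' \<subset> D" "is_vertex_cover_path m D'"
      using psubset.prems unfolding is_min_vertex_cover_path_def by blast
    then obtain C where "C \<subseteq> D'" "is_min_vertex_cover_path m C"
      using psubset.IH by blast
    with D'(1) show ?thesis by (intro exI[of _ C]) auto
  qed
qed

lemma cover_ideal_path_eq: "cover_ideal_path m = {w. covers_path m w}"
proof (intro set_eqI iffI; simp)
  fix w assume "w \<in> cover_ideal_path m"
  then obtain C where C: "is_vertex_cover_path m C" and dvd: "mdvd (set_monomial C) w"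
    unfolding cover_ideal_path_def mideal_def is_min_vertex_cover_path_def by blast
  have nonzero: "w i \<noteq> 0" if "i \<in> C" for i
    using spec[OF dvd[unfolded mdvd_def], of i] that by (simp add: set_monomial_def)
  show "covers_path m w"
    unfolding covers_path_def
  proof (intro allI impI)
    fix i assume "1 \<le> i \<and> i < m"
    with C have "i \<in> C \<or> Suc i \<in> C" unfolding is_vertex_cover_path_def by simp
    with nonzero show "w i \<noteq> 0 \<or> w (Suc i) \<noteq> 0" by blast
  qed
next
  fix w assume cov: "covers_path m w"
  define D where "D = {i \<in> {1..m}. w i \<noteq> 0}"
  have "is_vertex_cover_path m D"
    using cov unfolding is_vertex_cover_path_def covers_path_def D_def by auto
  then obtain C where "C \<subseteq> D" "is_min_vertex_cover_path m C"
    using ex_min_vertex_cover_path_subset[of D] unfolding D_def by auto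
  moreover from \<open>C \<subseteq> D\<close> have "mdvd (set_monomial C) w"
    unfolding mdvd_def set_monomial_def D_def by auto
  ultimately show "w \<in> cover_ideal_path m"
    unfolding cover_ideal_path_def mideal_def by blast
qed

lemma covers_path_add_root:
  "covers_path m u \<Longrightarrow> covers_path (m + 2) (mmul (var (m + 1)) u)"
  unfolding covers_path_def mmul_def var_def by (auto simp: less_Suc_eq)

lemma covers_path_add_two_roots:
  "covers_path m u \<Longrightarrow> covers_path (m + 3) (mmul (mmul (var (m + 3)) (var (m + 1))) u)"
  unfolding covers_path_def mmul_def var_def by (auto simp: less_Suc_eq)

lemma rooted_covers_path: "w \<in> set (rooted m) \<Longrightarrow> covers_path m w"
proof (induction m arbitrary: w rule: rooted.induct)
  case (6 k)
  then show ?case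
    using covers_path_add_root[of "k + 3"] covers_path_add_two_roots[of "k + 2"]
    by (auto simp: numeral_eq_Suc)
qed (auto simp: covers_path_def var_def mmul_def less_Suc_eq)

lemma covers_path_last_edge: "covers_path (m + 2) w \<Longrightarrow> w (m + 1) \<noteq> 0 \<or> w (m + 2) \<noteq> 0"
  unfolding covers_path_def by (drule spec[of _ "m + 1"]) simp

definition mtrunc :: "nat \<Rightarrow> monomial \<Rightarrow> monomial" where
  "mtrunc k w = (\<lambda>i. if i \<le> k then w i else 0)"

lemma covers_path_mtrunc: "covers_path m w \<Longrightarrow> k \<le> m \<Longrightarrow> covers_path k (mtrunc k w)"
  unfolding covers_path_def mtrunc_def by auto

lemma mgens_sq_cover_ideal_path_extend:
  fixes m :: nat and w :: monomial
  defines "M \<equiv> mmul (mmul (var (m + 1)) (var (m + 2))) w"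
  assumes w: "w \<in> mgens (mideal_sq (cover_ideal_path m))"
    and M: "M \<in> mideal_sq (cover_ideal_path (m + 2))"
  shows "M \<in> mgens (mideal_sq (cover_ideal_path (m + 2)))"
proof (rule mgensI[OF M])
  fix N assume N: "N \<in> mideal_sq (cover_ideal_path (m + 2))" "mdvd N M"
  then obtain a b where a: "covers_path (m + 2) a" and b: "covers_path (m + 2) b"
    and abN: "mdvd (mmul a b) N"
    by (auto simp: mem_mideal_sq_iff cover_ideal_path_eq)
  have abM: "a i + b i \<le> M i" for i
    using mdvd_trans[OF abN N(2)] by (simp add: mdvd_def mmul_def)
  have M_low: "M i = w i" if "i \<le> m" for i
    using that by (simp add: M_def mmul_def var_def)
  have ab_low: "a i + b i \<le> w i" if "i \<le> m" for i
    using abM[of i] M_low[OF that] by simp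
  have "mmul (mtrunc m a) (mtrunc m b) \<in> mideal_sq (cover_ideal_path m)"
    using a b by (intro mmul_mem_mideal_sq) (simp_all add: cover_ideal_path_eq covers_path_mtrunc)
  moreover have "mdvd (mmul (mtrunc m a) (mtrunc m b)) w"
    using ab_low by (simp add: mdvd_def mmul_def mtrunc_def)
  ultimately have w_eq: "mmul (mtrunc m a) (mtrunc m b) = w"
    using w by (simp add: mgens_def)
  have "M i \<le> a i + b i" for i
  proof -
    consider "i \<le> m" | "i = m + 1 \<or> i = m + 2" | "m + 2 < i" by fastforce
    then show ?thesis
    proof cases
      case 1
      then show ?thesis using M_low fun_cong[OF w_eq, of i] by (simp add: mmul_def mtrunc_def)
    next
      case 2
      have "w (m + 1) = 0" "w (m + 2) = 0"
        using fun_cong[OF w_eq, of "m + 1"] fun_cong[OF w_eq, of "m + 2"]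
        by (simp_all add: mmul_def mtrunc_def)
      then have "M (m + 1) = 1" "M (m + 2) = 1"
        by (simp_all add: M_def mmul_def var_def)
      moreover have "a (m + 1) \<noteq> 0 \<or> a (m + 2) \<noteq> 0" "b (m + 1) \<noteq> 0 \<or> b (m + 2) \<noteq> 0"
        using covers_path_last_edge[OF a] covers_path_last_edge[OF b] by blast+
      ultimately have "a (m + 1) + b (m + 1) = 1 \<and> a (m + 2) + b (m + 2) = 1"
        using abM[of "m + 1"] abM[of "m + 2"] by linarith
      with 2 \<open>M (m + 1) = 1\<close> \<open>M (m + 2) = 1\<close> show ?thesis by auto
    next
      case 3
      then have "w i = 0" using fun_cong[OF w_eq, of i] by (simp add: mmul_def mtrunc_def)
      with 3 show ?thesis by (simp add: M_def mmul_def var_def)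
    qed
  qed
  then have "mdvd M (mmul a b)" by (simp add: mdvd_def mmul_def)
  then show "mdvd M N" using abN by (rule mdvd_trans)
qed

theorem lemma3p12:
  fixes n :: nat and u v :: monomial
  assumes "n \<ge> 7"
    and "mmul (var (n - 1)) u \<in> set (listA n)"
    and "mmul (var n) v \<in> set (listC n)"
    and "mmul u v \<in> mgens (mideal_sq (cover_ideal_path (n - 2)))"
  shows "mmul (mmul (var (n - 1)) (var n)) (mmul u v) \<in> mgens (mideal_sq (cover_ideal_path n))"
proof -
  define m where "m = n - 2"
  have n: "n = m + 2" using assms(1) by (simp add: m_def)
  have "mmul (var (n - 1)) u \<in> cover_ideal_path n" "mmul (var n) v \<in> cover_ideal_path n"
    using assms(2,3) rooted_covers_path
    by (auto simp: listA_def listC_def cover_ideal_path_eq)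
  then have "mmul (mmul (var (n - 1)) u) (mmul (var n) v) \<in> mideal_sq (cover_ideal_path n)"
    by (rule mmul_mem_mideal_sq)
  moreover have "mmul (mmul (var (n - 1)) u) (mmul (var n) v)
      = mmul (mmul (var (n - 1)) (var n)) (mmul u v)"
    by (simp add: mmul_def add_ac)
  ultimately show ?thesis
    using mgens_sq_cover_ideal_path_extend[of "mmul u v" m] assms(4) unfolding n by simp
qed

end
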